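(* Let $T$ be a non-empty compact Hausdorff space and $M$ a pseudo MV-algebra. The kernel of a $(C(T),1_T)$-state-morphism $s$ on $M$ is a maximal ideal of $M$ if and only if there is a state-morphism $s_0$ on $M$ such that $s(x)=s_0(x)1_T$ for all $x\in M$. The same statement holds with $C(T)$ replaced by $C_b(T)$, the Riesz space of bounded real-valued functions on $T$.
   Context: $C(T)$ is the Riesz space of continuous real-valued functions on $T$ with pointwise order; $1_T$ is the constant function $1$. Pseudo MV-algebra: an algebra $(M;\oplus,{}^-,{}^\sim,0,1)$, $0\neq1$, satisfying the standard pseudo MV-algebra axioms; equivalently (up to isomorphism) $M=\Gamma(G,u)=[0,u]$ for a unital $\ell$-group $(G,u)$ with $x\oplus y=(x+y)\wedge u$, $x^-=u-x$, $x^\sim=-x+u$. Ideal: nonempty down-set closed under $\oplus$; maximal = maximal among proper ideals. For a unital Riesz space $(R,1_R)$, $\Gamma(R,1_R)$ is the MV-algebra on $[0,1_R]$, and an $(R,1_R)$-state-morphism is a pseudo MV-algebra homomorphism $M\to\Gamma(R,1_R)$; a state-morphism is an $(\mathbb R,1)$-state-morphism. $\mathrm{Ker}(s)=\{x:s(x)=0\}$. *)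

theory Defs
  imports "HOL-Analysis.Analysis"
begin

record 'a pmv =
  pmv_carrier :: "'a set"
  pmv_oplus :: "'a \<Rightarrow> 'a \<Rightarrow> 'a"
  pmv_negl :: "'a \<Rightarrow> 'a"
  pmv_negr :: "'a \<Rightarrow> 'a"
  pmv_zero :: 'a
  pmv_one :: 'a

definition pmv_odot :: "'a pmv \<Rightarrow> 'a \<Rightarrow> 'a \<Rightarrow> 'a" where
  "pmv_odot M x y = pmv_negr M (pmv_oplus M (pmv_negl M x) (pmv_negl M y))"

definition pseudo_mv_algebra :: "'a pmv \<Rightarrow> bool" where
  "pseudo_mv_algebra M \<longleftrightarrow>
     (let A = pmv_carrier M; p = pmv_oplus M; m = pmv_negl M; t = pmv_negr M;
          z = pmv_zero M; u = pmv_one M; d = pmv_odot M in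
      z \<in> A \<and> u \<in> A \<and> z \<noteq> u \<and>
      (\<forall>x\<in>A. \<forall>y\<in>A. p x y \<in> A) \<and> (\<forall>x\<in>A. m x \<in> A) \<and> (\<forall>x\<in>A. t x \<in> A) \<and>
      (\<forall>x\<in>A. \<forall>y\<in>A. \<forall>w\<in>A. p x (p y w) = p (p x y) w) \<and>
      (\<forall>x\<in>A. p x z = x \<and> p z x = x) \<and>
      (\<forall>x\<in>A. p x u = u \<and> p u x = u) \<and>
      t u = z \<and> m u = z \<and>
      (\<forall>x\<in>A. \<forall>y\<in>A. t (p (m x) (m y)) = m (p (t x) (t y))) \<and>
      (\<forall>x\<in>A. \<forall>y\<in>A.
          p x (d (t x) y) = p y (d (t y) x) \<and>
          p y (d (t y) x) = p (d x (m y)) y \<and>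
          p (d x (m y)) y = p (d y (m x)) x) \<and>
      (\<forall>x\<in>A. \<forall>y\<in>A. d x (p (m x) y) = d (p x (t y)) y) \<and>
      (\<forall>x\<in>A. t (m x) = x))"

definition pmv_le :: "'a pmv \<Rightarrow> 'a \<Rightarrow> 'a \<Rightarrow> bool" where
  "pmv_le M x y \<longleftrightarrow> pmv_oplus M (pmv_negl M x) y = pmv_one M"

definition pmv_ideal :: "'a pmv \<Rightarrow> 'a set \<Rightarrow> bool" where
  "pmv_ideal M I \<longleftrightarrow> I \<subseteq> pmv_carrier M \<and> I \<noteq> {} \<and>
     (\<forall>x\<in>I. \<forall>y\<in>pmv_carrier M. pmv_le M y x \<longrightarrow> y \<in> I) \<and>
     (\<forall>x\<in>I. \<forall>y\<in>I. pmv_oplus M x y \<in> I)"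

definition pmv_maximal_ideal :: "'a pmv \<Rightarrow> 'a set \<Rightarrow> bool" where
  "pmv_maximal_ideal M I \<longleftrightarrow> pmv_ideal M I \<and> I \<noteq> pmv_carrier M \<and>
     (\<forall>J. pmv_ideal M J \<and> J \<noteq> pmv_carrier M \<and> I \<subseteq> J \<longrightarrow> J = I)"

definition pmv_hom :: "'a pmv \<Rightarrow> 'b pmv \<Rightarrow> ('a \<Rightarrow> 'b) \<Rightarrow> bool" where
  "pmv_hom M N h \<longleftrightarrow>
     (\<forall>x\<in>pmv_carrier M. h x \<in> pmv_carrier N) \<and>
     (\<forall>x\<in>pmv_carrier M. \<forall>y\<in>pmv_carrier M.
         h (pmv_oplus M x y) = pmv_oplus N (h x) (h y)) \<and>
     (\<forall>x\<in>pmv_carrier M. h (pmv_negl M x) = pmv_negl N (h x)) \<and>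
     (\<forall>x\<in>pmv_carrier M. h (pmv_negr M x) = pmv_negr N (h x)) \<and>
     h (pmv_zero M) = pmv_zero N \<and> h (pmv_one M) = pmv_one N"

definition pmv_kernel :: "'a pmv \<Rightarrow> 'b pmv \<Rightarrow> ('a \<Rightarrow> 'b) \<Rightarrow> 'a set" where
  "pmv_kernel M N s = {x \<in> pmv_carrier M. s x = pmv_zero N}"

definition Gamma_real :: "real pmv" where
  "Gamma_real = \<lparr>pmv_carrier = {0..1}, pmv_oplus = (\<lambda>a b. min (a + b) 1),
     pmv_negl = (\<lambda>a. 1 - a), pmv_negr = (\<lambda>a. 1 - a), pmv_zero = 0, pmv_one = 1\<rparr>"

definition Gamma_C :: "('t::topological_space \<Rightarrow> real) pmv" where
  "Gamma_C = \<lparr>pmv_carrier = {f. continuous_on UNIV f \<and> (\<forall>t. 0 \<le> f t \<and> f t \<le> 1)},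
     pmv_oplus = (\<lambda>f g t. min (f t + g t) 1),
     pmv_negl = (\<lambda>f t. 1 - f t), pmv_negr = (\<lambda>f t. 1 - f t),
     pmv_zero = (\<lambda>t. 0), pmv_one = (\<lambda>t. 1)\<rparr>"

text \<open>\<Gamma>(C_b(T),1_T): all (automatically bounded) functions T \<rightarrow> [0,1].\<close>
definition Gamma_Cb :: "('t \<Rightarrow> real) pmv" where
  "Gamma_Cb = \<lparr>pmv_carrier = {f. \<forall>t. 0 \<le> f t \<and> f t \<le> 1},
     pmv_oplus = (\<lambda>f g t. min (f t + g t) 1),
     pmv_negl = (\<lambda>f t. 1 - f t), pmv_negr = (\<lambda>f t. 1 - f t),
     pmv_zero = (\<lambda>t. 0), pmv_one = (\<lambda>t. 1)\<rparr>"

end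

theory Submission
  imports Defs
begin

text \<open>Two facts about state-morphisms s : M \<rightarrow> [0,1] carry the proof. The kernel of s is a
  maximal ideal, by an Archimedean argument: every x outside it has some multiple
  x \<oplus> \<dots> \<oplus> x of value 1, whose complement lies in the kernel. And s is determined by its
  kernel: if two state-morphisms with equal kernels differ at x, then x \<oplus> x or x \<odot> x
  doubles the gap between them, which cannot go on for ever inside [0,1].

  A (C_b(T),1_T)-state-morphism s is a family of state-morphisms s_t = s(-)(t) with
  Ker(s) = \<Inter>_t Ker(s_t). If Ker(s) is maximal it equals every Ker(s_t), so all s_t coincide
  and s is constant in t. Conversely, a constant s has the maximal kernel of s_0. The case of
  C(T) is the same, since \<Gamma>(C(T),1_T) is a subalgebra of \<Gamma>(C_b(T),1_T).\<close>

abbreviation state_morphism :: "'a pmv \<Rightarrow> ('a \<Rightarrow> real) \<Rightarrow> bool" where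
  "state_morphism M s \<equiv> pmv_hom M Gamma_real s"

lemma pmv_zero_closed: "pseudo_mv_algebra M \<Longrightarrow> pmv_zero M \<in> pmv_carrier M"
  and pmv_one_closed: "pseudo_mv_algebra M \<Longrightarrow> pmv_one M \<in> pmv_carrier M"
  and pmv_oplus_closed: "pseudo_mv_algebra M \<Longrightarrow> x \<in> pmv_carrier M \<Longrightarrow> y \<in> pmv_carrier M \<Longrightarrow>
    pmv_oplus M x y \<in> pmv_carrier M"
  and pmv_negl_closed: "pseudo_mv_algebra M \<Longrightarrow> x \<in> pmv_carrier M \<Longrightarrow>
    pmv_negl M x \<in> pmv_carrier M"
  and pmv_negr_closed: "pseudo_mv_algebra M \<Longrightarrow> x \<in> pmv_carrier M \<Longrightarrow>
    pmv_negr M x \<in> pmv_carrier M"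
  and pmv_oplus_zero_right: "pseudo_mv_algebra M \<Longrightarrow> x \<in> pmv_carrier M \<Longrightarrow>
    pmv_oplus M x (pmv_zero M) = x"
  and pmv_oplus_one_right: "pseudo_mv_algebra M \<Longrightarrow> x \<in> pmv_carrier M \<Longrightarrow>
    pmv_oplus M x (pmv_one M) = pmv_one M"
  and pmv_oplus_one_left: "pseudo_mv_algebra M \<Longrightarrow> x \<in> pmv_carrier M \<Longrightarrow>
    pmv_oplus M (pmv_one M) x = pmv_one M"
  and pmv_negl_one: "pseudo_mv_algebra M \<Longrightarrow> pmv_negl M (pmv_one M) = pmv_zero M"
  and pmv_negr_negl: "pseudo_mv_algebra M \<Longrightarrow> x \<in> pmv_carrier M \<Longrightarrow>
    pmv_negr M (pmv_negl M x) = x"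
  and pmv_oplus_odot_negr_commute: "pseudo_mv_algebra M \<Longrightarrow>
    x \<in> pmv_carrier M \<Longrightarrow> y \<in> pmv_carrier M \<Longrightarrow>
    pmv_oplus M x (pmv_odot M (pmv_negr M x) y) = pmv_oplus M y (pmv_odot M (pmv_negr M y) x)"
  unfolding pseudo_mv_algebra_def Let_def by auto

lemma pmv_odot_closed:
  "pseudo_mv_algebra M \<Longrightarrow> x \<in> pmv_carrier M \<Longrightarrow> y \<in> pmv_carrier M \<Longrightarrow>
    pmv_odot M x y \<in> pmv_carrier M"
  unfolding pmv_odot_def by (simp add: pmv_oplus_closed pmv_negl_closed pmv_negr_closed)

lemma pmv_oplus_negr_self:
  assumes M: "pseudo_mv_algebra M" and x: "x \<in> pmv_carrier M"
  shows "pmv_oplus M x (pmv_negr M x) = pmv_one M"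
proof -
  have "pmv_odot M (pmv_negr M x) (pmv_one M) = pmv_negr M x"
    unfolding pmv_odot_def
    using M x by (simp add: pmv_negl_one pmv_negr_closed pmv_negl_closed pmv_oplus_zero_right
        pmv_negr_negl)
  then have "pmv_oplus M x (pmv_negr M x) =
      pmv_oplus M (pmv_one M) (pmv_odot M (pmv_negr M (pmv_one M)) x)"
    using pmv_oplus_odot_negr_commute[OF M x pmv_one_closed[OF M]] by simp
  also have "\<dots> = pmv_one M"
    using M x by (simp add: pmv_oplus_one_left pmv_odot_closed pmv_negr_closed pmv_one_closed)
  finally show ?thesis .
qed

lemma pmv_le_one: "pseudo_mv_algebra M \<Longrightarrow> x \<in> pmv_carrier M \<Longrightarrow> pmv_le M x (pmv_one M)"
  unfolding pmv_le_def by (simp add: pmv_oplus_one_right pmv_negl_closed)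

lemma pmv_ideal_eq_carrier_if_one_mem:
  assumes M: "pseudo_mv_algebra M" and I: "pmv_ideal M I" and one: "pmv_one M \<in> I"
  shows "I = pmv_carrier M"
  using I one pmv_le_one[OF M] unfolding pmv_ideal_def by blast

lemma pmv_maximal_idealD:
  "pmv_maximal_ideal M I \<Longrightarrow> pmv_ideal M J \<Longrightarrow> J \<noteq> pmv_carrier M \<Longrightarrow> I \<subseteq> J \<Longrightarrow> J = I"
  unfolding pmv_maximal_ideal_def by blast

lemma pmv_ideal_funpow_oplus_mem:
  assumes I: "pmv_ideal M I" and x: "x \<in> I"
  shows "(pmv_oplus M x ^^ n) x \<in> I"
  using I x unfolding pmv_ideal_def by (induction n) auto

lemma state_morphismD:
  assumes "state_morphism M s"
  shows "x \<in> pmv_carrier M \<Longrightarrow> 0 \<le> s x \<and> s x \<le> 1"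
    and "x \<in> pmv_carrier M \<Longrightarrow> y \<in> pmv_carrier M \<Longrightarrow> s (pmv_oplus M x y) = min (s x + s y) 1"
    and "x \<in> pmv_carrier M \<Longrightarrow> s (pmv_negl M x) = 1 - s x"
    and "x \<in> pmv_carrier M \<Longrightarrow> s (pmv_negr M x) = 1 - s x"
    and "s (pmv_zero M) = 0"
    and "s (pmv_one M) = 1"
  using assms unfolding pmv_hom_def Gamma_real_def by auto

lemma pmv_kernel_Gamma_real: "pmv_kernel M Gamma_real s = {x \<in> pmv_carrier M. s x = 0}"
  unfolding pmv_kernel_def Gamma_real_def by simp

lemma state_morphism_funpow_oplus:
  assumes M: "pseudo_mv_algebra M" and s: "state_morphism M s" and x: "x \<in> pmv_carrier M"
  shows "(pmv_oplus M x ^^ n) x \<in> pmv_carrier M \<and>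
    s ((pmv_oplus M x ^^ n) x) = min (real (Suc n) * s x) 1"
proof (induction n)
  case 0
  then show ?case using x state_morphismD(1)[OF s x] by simp
next
  case (Suc n)
  then have "s ((pmv_oplus M x ^^ Suc n) x) = min (s x + min (real (Suc n) * s x) 1) 1"
    using x state_morphismD(2)[OF s] by simp
  also have "\<dots> = min (real (Suc (Suc n)) * s x) 1"
    using state_morphismD(1)[OF s x] by (simp add: min_def algebra_simps)
  finally show ?case using Suc M x by (simp add: pmv_oplus_closed)
qed

lemma state_morphism_kernel_ideal:
  assumes M: "pseudo_mv_algebra M" and s: "state_morphism M s"
  shows "pmv_ideal M (pmv_kernel M Gamma_real s)"
  unfolding pmv_ideal_def pmv_kernel_Gamma_real
proof (intro conjI ballI impI)
  show "{x \<in> pmv_carrier M. s x = 0} \<noteq> {}"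
    using pmv_zero_closed[OF M] state_morphismD(5)[OF s] by blast
next
  fix x y assume x: "x \<in> {x \<in> pmv_carrier M. s x = 0}"
    and y: "y \<in> pmv_carrier M" and "pmv_le M y x"
  then have "s (pmv_oplus M (pmv_negl M y) x) = 1"
    using state_morphismD(6)[OF s] unfolding pmv_le_def by simp
  then have "min (1 - s y + s x) 1 = 1"
    using x state_morphismD(2,3)[OF s] pmv_negl_closed[OF M y] y by simp
  then show "y \<in> {x \<in> pmv_carrier M. s x = 0}"
    using x y state_morphismD(1)[OF s y] by auto
next
  fix x y assume "x \<in> {x \<in> pmv_carrier M. s x = 0}" "y \<in> {x \<in> pmv_carrier M. s x = 0}"
  then show "pmv_oplus M x y \<in> {x \<in> pmv_carrier M. s x = 0}"
    using state_morphismD(2)[OF s] pmv_oplus_closed[OF M] by auto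
qed auto

lemma state_morphism_kernel_ne_carrier:
  "pseudo_mv_algebra M \<Longrightarrow> state_morphism M s \<Longrightarrow> pmv_kernel M Gamma_real s \<noteq> pmv_carrier M"
  using pmv_one_closed[of M] state_morphismD(6)[of M s] by (force simp: pmv_kernel_Gamma_real)

lemma state_morphism_kernel_maximal:
  assumes M: "pseudo_mv_algebra M" and s: "state_morphism M s"
  shows "pmv_maximal_ideal M (pmv_kernel M Gamma_real s)"
proof -
  let ?K = "pmv_kernel M Gamma_real s"
  have "J = ?K" if J: "pmv_ideal M J" "J \<noteq> pmv_carrier M" "?K \<subseteq> J" for J
  proof (rule ccontr)
    assume "J \<noteq> ?K"
    then obtain x where xJ: "x \<in> J" and xK: "x \<notin> ?K" using J(3) by blast
    have x: "x \<in> pmv_carrier M" using xJ J(1) unfolding pmv_ideal_def by blast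
    have pos: "s x > 0"
      using xK x state_morphismD(1)[OF s x] by (auto simp: pmv_kernel_Gamma_real)
    obtain n where "1 / s x < real n" using reals_Archimedean2 by blast
    then have "1 \<le> real (Suc n) * s x" using pos by (simp add: field_simps)
    then have nx: "(pmv_oplus M x ^^ n) x \<in> pmv_carrier M" "s ((pmv_oplus M x ^^ n) x) = 1"
      using state_morphism_funpow_oplus[OF M s x, of n] by auto
    have "pmv_negr M ((pmv_oplus M x ^^ n) x) \<in> J"
      using J(3) nx pmv_negr_closed[OF M] state_morphismD(4)[OF s]
      by (auto simp: pmv_kernel_Gamma_real)
    then have "pmv_one M \<in> J"
      using J(1) pmv_ideal_funpow_oplus_mem[OF J(1) xJ] pmv_oplus_negr_self[OF M nx(1)]
      unfolding pmv_ideal_def by metis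
    then show False using pmv_ideal_eq_carrier_if_one_mem[OF M J(1)] J(2) by blast
  qed
  then show ?thesis
    unfolding pmv_maximal_ideal_def
    using state_morphism_kernel_ideal[OF M s] state_morphism_kernel_ne_carrier[OF M s] by blast
qed

lemma state_morphism_oplus_self:
  "state_morphism M s \<Longrightarrow> x \<in> pmv_carrier M \<Longrightarrow> s (pmv_oplus M x x) = min (2 * s x) 1"
  by (simp add: state_morphismD(2))

lemma state_morphism_odot_self:
  assumes M: "pseudo_mv_algebra M" and s: "state_morphism M s" and x: "x \<in> pmv_carrier M"
  shows "s (pmv_odot M x x) = max (2 * s x - 1) 0"
  unfolding pmv_odot_def
  using x state_morphismD(2,3,4)[OF s] pmv_negl_closed[OF M] pmv_oplus_closed[OF M]
  by (simp add: min_def max_def)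

lemma state_morphisms_gap_doubles:
  assumes M: "pseudo_mv_algebra M"
    and s1: "state_morphism M s1" and s2: "state_morphism M s2"
    and ker: "pmv_kernel M Gamma_real s1 = pmv_kernel M Gamma_real s2"
    and x: "x \<in> pmv_carrier M" and ne: "s1 x \<noteq> s2 x"
  shows "\<exists>y\<in>pmv_carrier M. \<bar>s1 y - s2 y\<bar> = 2 * \<bar>s1 x - s2 x\<bar>"
proof -
  have xx: "pmv_oplus M x x \<in> pmv_carrier M" "pmv_odot M x x \<in> pmv_carrier M"
    using M x by (simp_all add: pmv_oplus_closed pmv_odot_closed)
  have same_zero: "s1 (pmv_odot M x x) = 0 \<longleftrightarrow> s2 (pmv_odot M x x) = 0"
    using ker xx(2) by (auto simp: pmv_kernel_Gamma_real set_eq_iff)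
  note oplus = state_morphism_oplus_self[OF s1 x] state_morphism_oplus_self[OF s2 x]
  note odot = state_morphism_odot_self[OF M s1 x] state_morphism_odot_self[OF M s2 x]
  \<comment> \<open>Values on opposite sides of 1/2 would put x \<odot> x into exactly one of the kernels.\<close>
  consider "s1 x \<le> 1/2" "s2 x \<le> 1/2" | "s1 x \<ge> 1/2" "s2 x \<ge> 1/2"
    using same_zero odot ne by (auto simp: max_def split: if_splits)
  then show ?thesis
  proof cases
    case 1
    then show ?thesis using xx(1) oplus by (intro bexI[of _ "pmv_oplus M x x"]) (auto simp: abs_if)
  next
    case 2
    then show ?thesis using xx(2) odot by (intro bexI[of _ "pmv_odot M x x"]) (auto simp: abs_if)
  qed
qed

lemma state_morphism_eq_if_kernel_eq:
  assumes M: "pseudo_mv_algebra M"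
    and s1: "state_morphism M s1" and s2: "state_morphism M s2"
    and ker: "pmv_kernel M Gamma_real s1 = pmv_kernel M Gamma_real s2"
    and x: "x \<in> pmv_carrier M"
  shows "s1 x = s2 x"
proof (rule ccontr)
  assume ne: "s1 x \<noteq> s2 x"
  let ?d = "\<bar>s1 x - s2 x\<bar>"
  have gap: "\<exists>y\<in>pmv_carrier M. \<bar>s1 y - s2 y\<bar> = 2 ^ n * ?d" for n
  proof (induction n)
    case 0
    then show ?case using x by auto
  next
    case (Suc n)
    then obtain y where y: "y \<in> pmv_carrier M" "\<bar>s1 y - s2 y\<bar> = 2 ^ n * ?d" by blast
    then have "s1 y \<noteq> s2 y" using ne by auto
    then show ?case
      using state_morphisms_gap_doubles[OF M s1 s2 ker y(1)] y(2) by (auto simp: mult.assoc)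
  qed
  obtain n where n: "1 / ?d < 2 ^ n" using real_arch_pow[of 2 "1 / ?d"] by auto
  obtain y where y: "y \<in> pmv_carrier M" "\<bar>s1 y - s2 y\<bar> = 2 ^ n * ?d" using gap by blast
  have "\<bar>s1 y - s2 y\<bar> \<le> 1" using state_morphismD(1)[OF s1 y(1)] state_morphismD(1)[OF s2 y(1)]
    by auto
  moreover have "1 < 2 ^ n * ?d" using n ne by (simp add: field_simps)
  ultimately show False using y(2) by simp
qed

lemma pmv_hom_Gamma_Cb_eval:
  "pmv_hom M Gamma_Cb s \<Longrightarrow> state_morphism M (\<lambda>x. s x t)"
  unfolding pmv_hom_def Gamma_Cb_def Gamma_real_def by auto

lemma pmv_kernel_Gamma_Cb:
  "pmv_kernel M Gamma_Cb s = (\<Inter>t. pmv_kernel M Gamma_real (\<lambda>x. s x t))"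
  unfolding pmv_kernel_def Gamma_Cb_def Gamma_real_def by (auto simp: fun_eq_iff)

lemma pmv_hom_Gamma_C_imp_Gamma_Cb: "pmv_hom M Gamma_C s \<Longrightarrow> pmv_hom M Gamma_Cb s"
  unfolding pmv_hom_def Gamma_C_def Gamma_Cb_def by auto

lemma pmv_kernel_Gamma_C_eq_Gamma_Cb: "pmv_kernel M Gamma_C s = pmv_kernel M Gamma_Cb s"
  unfolding pmv_kernel_def Gamma_C_def Gamma_Cb_def by simp

lemma Gamma_Cb_kernel_maximal_iff_constant:
  fixes s :: "'a \<Rightarrow> 't \<Rightarrow> real"
  assumes M: "pseudo_mv_algebra M" and s: "pmv_hom M Gamma_Cb s"
  shows "pmv_maximal_ideal M (pmv_kernel M Gamma_Cb s) \<longleftrightarrow>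
    (\<exists>s0. state_morphism M s0 \<and> (\<forall>x\<in>pmv_carrier M. s x = (\<lambda>t. s0 x)))"
proof
  assume max: "pmv_maximal_ideal M (pmv_kernel M Gamma_Cb s)"
  note s_t = pmv_hom_Gamma_Cb_eval[OF s]
  have ker_eval: "pmv_kernel M Gamma_real (\<lambda>x. s x t) = pmv_kernel M Gamma_Cb s" for t
  proof -
    have "pmv_kernel M Gamma_Cb s \<subseteq> pmv_kernel M Gamma_real (\<lambda>x. s x t)"
      unfolding pmv_kernel_Gamma_Cb by blast
    then show ?thesis
      by (rule pmv_maximal_idealD[OF max state_morphism_kernel_ideal[OF M s_t]
          state_morphism_kernel_ne_carrier[OF M s_t]])
  qed
  obtain t0 :: 't where True by blast
  have "s x = (\<lambda>t. s x t0)" if "x \<in> pmv_carrier M" for x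
  proof
    fix t
    show "s x t = s x t0"
      using state_morphism_eq_if_kernel_eq[OF M s_t s_t _ that] ker_eval by metis
  qed
  then show "\<exists>s0. state_morphism M s0 \<and> (\<forall>x\<in>pmv_carrier M. s x = (\<lambda>t. s0 x))"
    using s_t by blast
next
  assume "\<exists>s0. state_morphism M s0 \<and> (\<forall>x\<in>pmv_carrier M. s x = (\<lambda>t. s0 x))"
  then obtain s0 where s0: "state_morphism M s0" "\<forall>x\<in>pmv_carrier M. s x = (\<lambda>t. s0 x)"
    by blast
  then have "pmv_kernel M Gamma_Cb s = pmv_kernel M Gamma_real s0"
    unfolding pmv_kernel_def Gamma_Cb_def Gamma_real_def by (force simp: fun_eq_iff)
  then show "pmv_maximal_ideal M (pmv_kernel M Gamma_Cb s)"
    using state_morphism_kernel_maximal[OF M s0(1)] by simp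
qed

theorem proposition3p21:
  fixes M :: "'a pmv"
  assumes "pseudo_mv_algebra M"
    and "compact (UNIV :: 't::t2_space set)"
  shows "(\<forall>s :: 'a \<Rightarrow> 't \<Rightarrow> real. pmv_hom M Gamma_C s \<longrightarrow>
            (pmv_maximal_ideal M (pmv_kernel M Gamma_C s) \<longleftrightarrow>
             (\<exists>s0. pmv_hom M Gamma_real s0 \<and>
                   (\<forall>x\<in>pmv_carrier M. s x = (\<lambda>t. s0 x)))))
       \<and> (\<forall>s :: 'a \<Rightarrow> 't \<Rightarrow> real. pmv_hom M Gamma_Cb s \<longrightarrow>
            (pmv_maximal_ideal M (pmv_kernel M Gamma_Cb s) \<longleftrightarrow>
             (\<exists>s0. pmv_hom M Gamma_real s0 \<and>
                   (\<forall>x\<in>pmv_carrier M. s x = (\<lambda>t. s0 x)))))"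
  by (simp add: Gamma_Cb_kernel_maximal_iff_constant[OF assms(1)] pmv_hom_Gamma_C_imp_Gamma_Cb
      pmv_kernel_Gamma_C_eq_Gamma_Cb)

end
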